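(* Let $p,q$ be relatively prime non-zero integers with $q>0$ and $|p|>1$. (i) For $i\in\{1,\dots,|p|-1\}$ and $s\in\mathbb Z$, $$\varphi_i(s)-\varphi_{i-1}(s)=\begin{cases}1 & \text{if } i\equiv sq\pmod p,\\ -1 & \text{if } i\equiv (s+1)q\pmod p,\\ 0&\text{otherwise,}\end{cases}$$ and the two congruences $i\equiv sq$ and $i\equiv (s+1)q\pmod p$ are mutually exclusive. (ii) Let $g$ be a positive integer with $|p|\ge 2g+1$ and $\mu$ an integer with $0<\mu\le g$. Then for every $i\in\{1,\dots,|p|-1\}$, $$\sum_{|s|<\mu}\varphi_i(s)-\sum_{|s|<\mu}\varphi_{i-1}(s)=\begin{cases}1&\text{if } i\equiv(-\mu+1)q\pmod p,\\ -1 &\text{if } i\equiv \mu q\pmod p,\\ 0&\text{otherwise.}\end{cases}$$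
   Context: For relatively prime non-zero integers $p,q$ and $i\in\mathbb Z$, $\varphi_i(s)$ denotes the cardinality of the set $\{n\in\mathbb Z:\lfloor\frac{i+pn}{q}\rfloor=s\}$. *)

theory Defs
  imports Complex_Main "HOL-Number_Theory.Cong"
begin

definition phi :: "int \<Rightarrow> int \<Rightarrow> int \<Rightarrow> int \<Rightarrow> nat" where
  "phi p q i s = card {n::int. floor (real_of_int (i + p * n) / real_of_int q) = s}"

end

theory Submission
  imports Defs
begin

text \<open>The map n \<mapsto> i + p n identifies the set counted by phi p q i s with the integers
  m \<equiv> i (mod p) in the window [sq, sq + q). Passing from i - 1 to i shifts this window by one,
  so only its two endpoints sq and (s + 1) q contribute to the difference; summing over |s| < \<mu>
  telescopes to the outermost endpoints. Coprimality and the bound on |p| keep the two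
  competing congruences apart.\<close>

lemma sum_int_interval_telescope:
  fixes f :: "int \<Rightarrow> 'a::ab_group_add"
  assumes "a \<le> b"
  shows "(\<Sum>s\<in>{a..<b}. f s - f (s + 1)) = f a - f b"
  using assms
proof (induction b rule: int_ge_induct)
  case (step b)
  then have "{a..<b + 1} = insert b {a..<b}" by auto
  with step show ?case by simp
qed simp

lemma floor_divide_of_int_eq_iff:
  assumes "q > 0"
  shows "\<lfloor>real_of_int k / real_of_int q\<rfloor> = s \<longleftrightarrow> k \<in> {s * q..<s * q + q}"
proof -
  have "\<lfloor>real_of_int k / real_of_int q\<rfloor> = s
      \<longleftrightarrow> real_of_int (s * q) \<le> real_of_int k \<and> real_of_int k < real_of_int (s * q + q)"
    using assms by (simp add: floor_eq_iff pos_le_divide_eq pos_divide_less_eq algebra_simps)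
  then show ?thesis
    by (simp only: of_int_le_iff of_int_less_iff atLeastLessThan_iff)
qed

lemma card_progression_preimage:
  fixes i p :: int
  assumes "p \<noteq> 0"
  shows "card {n. i + p * n \<in> W} = card (W \<inter> {m. [m = i] (mod p)})"
proof -
  have "(\<lambda>n. i + p * n) ` {n. i + p * n \<in> W} = W \<inter> {m. [m = i] (mod p)}"
  proof (intro set_eqI iffI)
    fix m assume "m \<in> W \<inter> {m. [m = i] (mod p)}"
    then have "m \<in> W" and "[i = m] (mod p)"
      by (auto simp: cong_sym_eq)
    moreover obtain n where "m = i + p * n"
      using \<open>[i = m] (mod p)\<close> cong_iff_lin by blast
    ultimately show "m \<in> (\<lambda>n. i + p * n) ` {n. i + p * n \<in> W}"
      by blast
  qed (auto simp: cong_add_lcancel_0 cong_0_iff)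
  moreover have "inj (\<lambda>n. i + p * n)"
    using assms by (auto intro: injI)
  ultimately show ?thesis
    by (metis card_image inj_on_subset subset_UNIV)
qed

lemma phi_eq_sum_cong:
  assumes "p \<noteq> 0" and "q > 0"
  shows "int (phi p q i s) = (\<Sum>m\<in>{s * q..<s * q + q}. of_bool ([m = i] (mod p)))"
  unfolding phi_def floor_divide_of_int_eq_iff[OF assms(2)] card_progression_preimage[OF assms(1)]
  by simp

lemma phi_diff_eq:
  assumes "p \<noteq> 0" and "q > 0"
  shows "int (phi p q i s) - int (phi p q (i - 1) s)
    = of_bool ([i = s * q] (mod p)) - of_bool ([i = (s + 1) * q] (mod p))"
proof -
  have shift: "[m = i - 1] (mod p) \<longleftrightarrow> [m + 1 = i] (mod p)" for m
    using cong_add_rcancel[of m 1 "i - 1" p] by simp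
  have "int (phi p q i s) - int (phi p q (i - 1) s)
      = (\<Sum>m\<in>{s * q..<s * q + q}. of_bool ([m = i] (mod p)) - of_bool ([m + 1 = i] (mod p)))"
    using assms by (simp add: phi_eq_sum_cong shift sum_subtractf)
  also have "\<dots> = of_bool ([s * q = i] (mod p)) - of_bool ([s * q + q = i] (mod p))"
    using sum_int_interval_telescope[of "s * q" "s * q + q" "\<lambda>m. of_bool ([m = i] (mod p)) :: int"]
      assms by simp
  finally show ?thesis
    by (simp add: cong_sym_eq distrib_right)
qed

lemma sum_phi_diff_eq:
  assumes "p \<noteq> 0" and "q > 0" and "\<mu> > 0"
  shows "(\<Sum>s\<in>{s. \<bar>s\<bar> < \<mu>}. int (phi p q i s)) - (\<Sum>s\<in>{s. \<bar>s\<bar> < \<mu>}. int (phi p q (i - 1) s))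
    = of_bool ([i = (- \<mu> + 1) * q] (mod p)) - of_bool ([i = \<mu> * q] (mod p))"
proof -
  have "{s. \<bar>s\<bar> < \<mu>} = {- \<mu> + 1..<\<mu>}"
    by auto
  then show ?thesis
    using sum_int_interval_telescope[of "- \<mu> + 1" \<mu> "\<lambda>s. of_bool ([i = s * q] (mod p)) :: int"] assms
    by (simp add: phi_diff_eq flip: sum_subtractf)
qed

lemma coprime_cong_mult_unique:
  fixes a b i p q :: int
  assumes "coprime p q" and "[i = a * q] (mod p)" and "[i = b * q] (mod p)" and "\<bar>a - b\<bar> < \<bar>p\<bar>"
  shows "a = b"
proof -
  have "[a * q = b * q] (mod p)"
    using assms(2,3) by (metis cong_sym cong_trans)
  then have "[a = b] (mod p)"
    using assms(1) cong_mult_rcancel[of q p a b] by (simp add: coprime_commute)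
  then have "p dvd a - b"
    by (simp add: cong_iff_dvd_diff)
  with assms(4) show ?thesis
    using dvd_imp_le_int[of "a - b" p] by fastforce
qed

theorem lemma3p2:
  fixes p q :: int
  assumes "coprime p q" and "p \<noteq> 0" and "q \<noteq> 0" and "q > 0" and "\<bar>p\<bar> > 1"
  shows "(\<forall>i s. 1 \<le> i \<and> i \<le> \<bar>p\<bar> - 1 \<longrightarrow>
            int (phi p q i s) - int (phi p q (i - 1) s) =
              (if [i = s * q] (mod p) then 1
               else if [i = (s + 1) * q] (mod p) then -1 else 0)
            \<and> \<not> ([i = s * q] (mod p) \<and> [i = (s + 1) * q] (mod p)))
       \<and> (\<forall>g \<mu> i. g > 0 \<and> \<bar>p\<bar> \<ge> 2 * g + 1 \<and> 0 < \<mu> \<and> \<mu> \<le> g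
            \<and> 1 \<le> i \<and> i \<le> \<bar>p\<bar> - 1 \<longrightarrow>
            (\<Sum>s\<in>{s::int. \<bar>s\<bar> < \<mu>}. int (phi p q i s))
              - (\<Sum>s\<in>{s::int. \<bar>s\<bar> < \<mu>}. int (phi p q (i - 1) s)) =
              (if [i = (- \<mu> + 1) * q] (mod p) then 1
               else if [i = \<mu> * q] (mod p) then -1 else 0))"
proof -
  have exclusive: "\<not> ([i = s * q] (mod p) \<and> [i = (s + 1) * q] (mod p))" for i s
    using coprime_cong_mult_unique[OF assms(1), of i s "s + 1"] assms(5) by auto
  have "\<not> ([i = (- \<mu> + 1) * q] (mod p) \<and> [i = \<mu> * q] (mod p))"
    if "\<bar>p\<bar> \<ge> 2 * g + 1" and "0 < \<mu>" and "\<mu> \<le> g" for g \<mu> i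
    using coprime_cong_mult_unique[OF assms(1), of i "- \<mu> + 1" \<mu>] that by auto
  then show ?thesis
    using exclusive phi_diff_eq[OF assms(2,4)] sum_phi_diff_eq[OF assms(2,4)] by auto
qed

end
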